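(* Let $V=[n]$, let $\mathbb V=\{V_1,\dots,V_k\}$ be a partition of $V$ into nonempty classes, let $d:\mathbb V\to\mathbb N$, let $D$ be a $k\times k$ matrix of nonnegative integers, and let $\Omega=\langle\mathbb V,d,D\rangle$. The Markov chain $\mathcal M$ on $\Omega$ is irreducible; in particular, for any $G_0,G_1\in\Omega$ there is a finite sequence of legal switches which, applied successively starting from $G_0$, produces $G_1$.
   Context: $\langle\mathbb V,d,D\rangle$ is the set of simple graphs $G$ on $V$ in which every vertex of $V_i$ has degree $d(V_i)$, there are exactly $d_{ij}$ edges between $V_i$ and $V_j$ for $i\neq j$, and exactly $d_{ii}$ edges with both endpoints in $V_i$. For $G\in\Omega$, a legal switch $[uv,u'v'\,|\,uv',u'v]$ is defined when $u,u'$ belong to the same class $V_i$, $uv,u'v'\in E(G)$ and $uv',u'v\notin E(G)$; it produces the graph with edge set $E(G)\cup\{uv',u'v\}\setminus\{uv,u'v'\}$, which lies in $\Omega$. Two legal switches are distinct if they produce different graphs; $\ell(G)$ is the number of distinct legal switches from $G$. The chain $\mathcal M$: from $X_t=G$, with probability $1/2$ set $X_{t+1}=G$; with probability $1/2$ choose one of the $\ell(G)$ distinct legal switches uniformly, let $G'$ be the result, and set $X_{t+1}=G'$ with probability $\ell(G)/(\ell(G)+\ell(G'))$ and $X_{t+1}=G$ otherwise. *)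

theory Defs
  imports Complex_Main
begin

definition is_partition :: "nat \<Rightarrow> nat \<Rightarrow> (nat \<Rightarrow> nat set) \<Rightarrow> bool" where
  "is_partition n k cls \<longleftrightarrow>
     (\<Union>i<k. cls i) = {1..n} \<and> (\<forall>i<k. cls i \<noteq> {}) \<and>
     (\<forall>i<k. \<forall>j<k. i \<noteq> j \<longrightarrow> cls i \<inter> cls j = {})"

definition simple_graph_on :: "nat set \<Rightarrow> nat set set \<Rightarrow> bool" where
  "simple_graph_on V E \<longleftrightarrow> E \<subseteq> {{u, v} | u v. u \<in> V \<and> v \<in> V \<and> u \<noteq> v}"

definition degree :: "nat set set \<Rightarrow> nat \<Rightarrow> nat" where
  "degree E v = card {e \<in> E. v \<in> e}"

text \<open>The set \<Omega> = <V,d,D>: d i is the degree prescribed for class i, D i j the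
  number of edges between classes i and j (D i i: edges inside class i).\<close>
definition Omega :: "nat \<Rightarrow> nat \<Rightarrow> (nat \<Rightarrow> nat set) \<Rightarrow> (nat \<Rightarrow> nat) \<Rightarrow> (nat \<Rightarrow> nat \<Rightarrow> nat)
                      \<Rightarrow> nat set set set" where
  "Omega n k cls d D = {E. simple_graph_on {1..n} E \<and>
      (\<forall>i<k. \<forall>v\<in>cls i. degree E v = d i) \<and>
      (\<forall>i<k. \<forall>j<k. i \<noteq> j \<longrightarrow>
          card {e \<in> E. \<exists>u\<in>cls i. \<exists>v\<in>cls j. e = {u, v}} = D i j) \<and>
      (\<forall>i<k. card {e \<in> E. e \<subseteq> cls i} = D i i)}"

text \<open>Legal switch [uv,u'v' | uv',u'v] on G: u,u' in the same class, uv,u'v' edges,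
  uv',u'v non-edges (four distinct vertices, so that the new pairs are genuine edges).\<close>
definition legal_switch :: "nat \<Rightarrow> (nat \<Rightarrow> nat set) \<Rightarrow> nat set set
                             \<Rightarrow> nat \<Rightarrow> nat \<Rightarrow> nat \<Rightarrow> nat \<Rightarrow> bool" where
  "legal_switch k cls E u v u' v' \<longleftrightarrow>
     (\<exists>i<k. u \<in> cls i \<and> u' \<in> cls i) \<and>
     distinct [u, v, u', v'] \<and>
     {u, v} \<in> E \<and> {u', v'} \<in> E \<and> {u, v'} \<notin> E \<and> {u', v} \<notin> E"

definition switch_result :: "nat set set \<Rightarrow> nat \<Rightarrow> nat \<Rightarrow> nat \<Rightarrow> nat \<Rightarrow> nat set set" where
  "switch_result E u v u' v' = (E \<union> {{u, v'}, {u', v}}) - {{u, v}, {u', v'}}"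

text \<open>Graphs obtainable from G by one legal switch; distinct switches = distinct results.\<close>
definition switch_nbrs :: "nat \<Rightarrow> (nat \<Rightarrow> nat set) \<Rightarrow> nat set set \<Rightarrow> nat set set set" where
  "switch_nbrs k cls E = {switch_result E u v u' v' | u v u' v'. legal_switch k cls E u v u' v'}"

definition num_switches :: "nat \<Rightarrow> (nat \<Rightarrow> nat set) \<Rightarrow> nat set set \<Rightarrow> nat" where
  "num_switches k cls E = card (switch_nbrs k cls E)"

definition switch_rel :: "nat \<Rightarrow> nat \<Rightarrow> (nat \<Rightarrow> nat set) \<Rightarrow> (nat \<Rightarrow> nat) \<Rightarrow> (nat \<Rightarrow> nat \<Rightarrow> nat)
                           \<Rightarrow> (nat set set \<times> nat set set) set" where
  "switch_rel n k cls d D = {(G, G'). G \<in> Omega n k cls d D \<and> G' \<in> switch_nbrs k cls G}"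

definition trans_prob :: "nat \<Rightarrow> nat \<Rightarrow> (nat \<Rightarrow> nat set) \<Rightarrow> (nat \<Rightarrow> nat) \<Rightarrow> (nat \<Rightarrow> nat \<Rightarrow> nat)
                           \<Rightarrow> nat set set \<Rightarrow> nat set set \<Rightarrow> real" where
  "trans_prob n k cls d D G G' =
     (let off = (\<lambda>H. if H \<noteq> G \<and> H \<in> switch_nbrs k cls G
                      then (1/2) * (1 / real (num_switches k cls G)) *
                           (real (num_switches k cls G) /
                            (real (num_switches k cls G) + real (num_switches k cls H)))
                      else 0)
      in if G' = G then 1 - (\<Sum>H\<in>Omega n k cls d D - {G}. off H) else off G')"

fun trans_prob_n :: "nat \<Rightarrow> nat \<Rightarrow> (nat \<Rightarrow> nat set) \<Rightarrow> (nat \<Rightarrow> nat) \<Rightarrow> (nat \<Rightarrow> nat \<Rightarrow> nat)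
                     \<Rightarrow> nat \<Rightarrow> nat set set \<Rightarrow> nat set set \<Rightarrow> real" where
  "trans_prob_n n k cls d D 0 G G' = (if G = G' then 1 else 0)"
| "trans_prob_n n k cls d D (Suc t) G G' =
     (\<Sum>H\<in>Omega n k cls d D. trans_prob_n n k cls d D t G H * trans_prob n k cls d D H G')"

definition irreducible_chain :: "nat \<Rightarrow> nat \<Rightarrow> (nat \<Rightarrow> nat set) \<Rightarrow> (nat \<Rightarrow> nat) \<Rightarrow> (nat \<Rightarrow> nat \<Rightarrow> nat) \<Rightarrow> bool" where
  "irreducible_chain n k cls d D \<longleftrightarrow>
     (\<forall>G0\<in>Omega n k cls d D. \<forall>G1\<in>Omega n k cls d D. \<exists>t. trans_prob_n n k cls d D t G0 G1 > 0)"

end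

theory Submission
  imports Defs
begin

text \<open>Switches are reversible, so it suffices to show that for any G \<noteq> H in \<Omega> the distance
  |G \<triangle> H| can be decreased by switching in G and in H. The basic configuration is a cherry: a
  vertex v with an edge vp only in G and an edge vq only in H, where p and q lie in the same class.
  Since p and q have the same degree in both graphs, a count of the vertices that distinguish p
  from q shows that some switch at p or q reduces the distance by at least 2. Given an edge ab only
  in G, the prescribed edge counts between classes provide an edge a'b' only in H with a, a' and
  b, b' in the same classes; either these already form a cherry, or one switch at a private
  neighbour creates one at a cost of at most 2, which a second cherry pays back. Irreducibility of
  the chain follows because every legal switch has positive transition probability.\<close>

lemma simple_graph_on_edgeD:
  assumes "simple_graph_on V E" "{x, y} \<in> E"
  shows "x \<noteq> y" "x \<in> V" "y \<in> V"
  using assms unfolding simple_graph_on_def by (auto simp: doubleton_eq_iff)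

lemma simple_graph_on_edgeE:
  assumes "simple_graph_on V E" "e \<in> E"
  obtains x y where "e = {x, y}" "x \<noteq> y" "x \<in> V" "y \<in> V"
  using assms unfolding simple_graph_on_def by blast

lemma simple_graph_on_finite:
  assumes "simple_graph_on V E" "finite V"
  shows "finite E"
proof (rule finite_subset)
  show "E \<subseteq> Pow V"
    using assms(1) unfolding simple_graph_on_def by auto
qed (use assms(2) in simp)

definition neighbours :: "nat set set \<Rightarrow> nat \<Rightarrow> nat set" where
  "neighbours E x = {y. {x, y} \<in> E}"

lemma neighbours_subset: "simple_graph_on V E \<Longrightarrow> neighbours E x \<subseteq> V"
  unfolding neighbours_def by (auto dest: simple_graph_on_edgeD)

lemma degree_eq_card_neighbours:
  assumes "simple_graph_on V E"
  shows "degree E x = card (neighbours E x)"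
proof -
  have "bij_betw (\<lambda>y. {x, y}) (neighbours E x) {e \<in> E. x \<in> e}"
  proof (rule bij_betwI')
    fix e assume "e \<in> {e \<in> E. x \<in> e}"
    with assms obtain p q where "e = {p, q}" "e \<in> E" "x \<in> e"
      by (auto elim: simple_graph_on_edgeE)
    then show "\<exists>y \<in> neighbours E x. e = {x, y}"
      by (auto simp: neighbours_def insert_commute)
  qed (auto simp: neighbours_def doubleton_eq_iff)
  then show ?thesis
    unfolding degree_def by (simp add: bij_betw_same_card)
qed

lemma doubleton_between_iff:
  "(\<exists>a\<in>A. \<exists>b\<in>B. {x, y} = {a, b}) \<longleftrightarrow> (x \<in> A \<and> y \<in> B) \<or> (y \<in> A \<and> x \<in> B)"
  by (auto simp: doubleton_eq_iff)

lemma card_sym_diff_Int: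
  assumes "finite S" "finite T"
  shows "card (sym_diff S T) + 2 * card (S \<inter> T) = card S + card T"
proof -
  have "card (sym_diff S T) = card (S - T) + card (T - S)"
    using assms by (subst card_Un_disjoint) auto
  moreover have "card (S - T) = card S - card (S \<inter> T)" "card (T - S) = card T - card (S \<inter> T)"
    using assms by (simp_all add: card_Diff_subset_Int Int_commute)
  moreover have "card (S \<inter> T) \<le> card S" "card (S \<inter> T) \<le> card T"
    using assms by (simp_all add: card_mono)
  ultimately show ?thesis
    by linarith
qed

lemma card_Diff_commute:
  assumes "finite A" "finite B" "card A = card B"
  shows "card (A - B) = card (B - A)"
  using assms by (simp add: card_Diff_subset_Int Int_commute)

definition switch_pairs :: "nat \<Rightarrow> nat \<Rightarrow> nat \<Rightarrow> nat \<Rightarrow> nat set set" where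
  "switch_pairs u v u' v' = {{u, v}, {u', v'}, {u, v'}, {u', v}}"

definition switchable :: "nat set set \<Rightarrow> nat \<Rightarrow> nat \<Rightarrow> nat \<Rightarrow> nat \<Rightarrow> bool" where
  "switchable E u v u' v' \<longleftrightarrow>
     distinct [u, v, u', v'] \<and> {u, v} \<in> E \<and> {u', v'} \<in> E \<and> {u, v'} \<notin> E \<and> {u', v} \<notin> E"

lemma finite_switch_pairs [simp]: "finite (switch_pairs u v u' v')"
  by (simp add: switch_pairs_def)

lemma card_switch_pairs: "distinct [u, v, u', v'] \<Longrightarrow> card (switch_pairs u v u' v') = 4"
  by (auto simp: switch_pairs_def card_insert_if doubleton_eq_iff)

lemma mem_switch_result:
  assumes "switchable E u v u' v'"
  shows "e \<in> switch_result E u v u' v' \<longleftrightarrow> (e \<in> switch_pairs u v u' v') \<noteq> (e \<in> E)"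
  using assms unfolding switchable_def switch_result_def switch_pairs_def
  by (auto simp: doubleton_eq_iff)

lemma switch_result_sym_diff:
  assumes "switchable E u v u' v'"
  shows "sym_diff (switch_result E u v u' v') H = sym_diff (sym_diff E H) (switch_pairs u v u' v')"
  using mem_switch_result[OF assms] by blast

lemma card_sym_diff_switch_result:
  assumes "switchable E u v u' v'" "finite E" "finite H"
  shows "card (sym_diff (switch_result E u v u' v') H)
           + 2 * card (sym_diff E H \<inter> switch_pairs u v u' v') = card (sym_diff E H) + 4"
  using card_sym_diff_Int[of "sym_diff E H" "switch_pairs u v u' v'"] assms
    card_switch_pairs[of u v u' v']
  by (simp add: switch_result_sym_diff switchable_def switch_pairs_def)

lemma switch_result_switch_result:
  assumes "switchable E u v u' v'"
  shows "switchable (switch_result E u v u' v') u v' u' v"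
    and "switch_result (switch_result E u v u' v') u v' u' v = E"
  using assms unfolding switchable_def switch_result_def by (auto simp: doubleton_eq_iff)

lemma card_filter_doubleton:
  "x \<noteq> y \<Longrightarrow> card {e \<in> {x, y}. P e} = of_bool (P x) + of_bool (P y)"
proof -
  assume "x \<noteq> y"
  then have "{e \<in> {x, y}. P e} = (if P x then {x} else {}) \<union> (if P y then {y} else {})"
    and "(if P x then {x} else {}) \<inter> (if P y then {y} else {}) = {}"
    by auto
  then show ?thesis
    by (simp add: card_Un_disjoint)
qed

lemma card_filter_switch_result:
  assumes sw: "switchable E u v u' v'" and "finite E"
    and balanced: "of_bool (P {u, v'}) + of_bool (P {u', v}) = (of_bool (P {u, v}) + of_bool (P {u', v'}) :: nat)"
  shows "card {e \<in> switch_result E u v u' v'. P e} = card {e \<in> E. P e}"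
proof -
  define X where "X = {e \<in> E. P e}"
  define Y where "Y = {e \<in> {{u, v}, {u', v'}}. P e}"
  define Z where "Z = {e \<in> {{u, v'}, {u', v}}. P e}"
  have "{u, v'} \<noteq> {u', v}" "{u, v} \<noteq> {u', v'}"
    using sw by (auto simp: switchable_def doubleton_eq_iff)
  then have "card Z = card Y"
    unfolding Y_def Z_def by (simp only: card_filter_doubleton balanced not_False_eq_True)
  have "Y \<subseteq> X" "Z \<inter> X = {}" and split: "{e \<in> switch_result E u v u' v'. P e} = (X - Y) \<union> Z"
    using sw by (auto simp: switch_result_def switchable_def X_def Y_def Z_def)
  have "finite X" "finite Z"
    using \<open>finite E\<close> by (auto simp: X_def Z_def)
  then have "card {e \<in> switch_result E u v u' v'. P e} = card (X - Y) + card Z"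
    unfolding split using \<open>Z \<inter> X = {}\<close> by (intro card_Un_disjoint) auto
  also have "\<dots> = card X - card Y + card Z"
    using \<open>Y \<subseteq> X\<close> \<open>finite X\<close> by (simp add: card_Diff_subset finite_subset)
  also have "\<dots> = card X"
    using \<open>card Z = card Y\<close> card_mono[OF \<open>finite X\<close> \<open>Y \<subseteq> X\<close>] by simp
  finally show ?thesis
    by (simp add: X_def)
qed

locale switch_space =
  fixes n k :: nat and cls :: "nat \<Rightarrow> nat set" and d :: "nat \<Rightarrow> nat" and D :: "nat \<Rightarrow> nat \<Rightarrow> nat"
  assumes partition: "is_partition n k cls"
begin

abbreviation \<Omega> :: "nat set set set" where
  "\<Omega> \<equiv> Omega n k cls d D"

abbreviation switches :: "(nat set set \<times> nat set set) set" where
  "switches \<equiv> switch_rel n k cls d D"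

definition same_class :: "nat \<Rightarrow> nat \<Rightarrow> bool" where
  "same_class x y \<longleftrightarrow> (\<exists>i<k. x \<in> cls i \<and> y \<in> cls i)"

lemma class_exists: "x \<in> {1..n} \<Longrightarrow> \<exists>i<k. x \<in> cls i"
  using partition unfolding is_partition_def by blast

lemma class_unique: "i < k \<Longrightarrow> j < k \<Longrightarrow> x \<in> cls i \<Longrightarrow> x \<in> cls j \<Longrightarrow> i = j"
  using partition unfolding is_partition_def by blast

lemma same_class_sym: "same_class x y \<Longrightarrow> same_class y x"
  unfolding same_class_def by blast

lemma same_class_trans: "same_class x y \<Longrightarrow> same_class y z \<Longrightarrow> same_class x z"
  unfolding same_class_def using class_unique by blast

lemma same_class_mem_iff: "same_class x y \<Longrightarrow> i < k \<Longrightarrow> x \<in> cls i \<longleftrightarrow> y \<in> cls i"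
  unfolding same_class_def using class_unique by blast

lemma legal_switch_iff:
  "legal_switch k cls G u v u' v' \<longleftrightarrow> same_class u u' \<and> switchable G u v u' v'"
  unfolding legal_switch_def same_class_def switchable_def by blast

lemma Omega_simple_graph: "G \<in> \<Omega> \<Longrightarrow> simple_graph_on {1..n} G"
  by (simp add: Omega_def)

lemma Omega_finite_graph: "G \<in> \<Omega> \<Longrightarrow> finite G"
  using Omega_simple_graph simple_graph_on_finite by blast

lemma finite_Omega: "finite \<Omega>"
proof (rule finite_subset)
  show "\<Omega> \<subseteq> Pow (Pow {1..n})"
    unfolding Omega_def simple_graph_on_def by auto
qed simp

lemma finite_neighbours: "G \<in> \<Omega> \<Longrightarrow> finite (neighbours G x)"
  using neighbours_subset[OF Omega_simple_graph] finite_subset by blast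

lemma card_neighbours_eq:
  assumes "G \<in> \<Omega>" "same_class p q"
  shows "card (neighbours G p) = card (neighbours G q)"
proof -
  obtain i where "i < k" "p \<in> cls i" "q \<in> cls i"
    using assms(2) unfolding same_class_def by blast
  then have "degree G p = degree G q"
    using assms(1) unfolding Omega_def by auto
  then show ?thesis
    using degree_eq_card_neighbours[OF Omega_simple_graph[OF assms(1)]] by simp
qed

lemma card_neighbours_Diff_eq:
  assumes "G \<in> \<Omega>" "same_class p q"
  shows "card (neighbours G p - {q}) = card (neighbours G q - {p})"
proof -
  have "q \<in> neighbours G p \<longleftrightarrow> p \<in> neighbours G q"
    by (simp add: neighbours_def insert_commute)
  moreover have "finite (neighbours G p)" "finite (neighbours G q)"
    using finite_neighbours[OF assms(1)] by blast+
  ultimately show ?thesis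
    using card_neighbours_eq[OF assms] by (cases "q \<in> neighbours G p") (simp_all add: card_Diff_singleton)
qed

lemma card_edges_between:
  assumes "G \<in> \<Omega>" "i < k" "j < k"
  shows "card {e \<in> G. \<exists>x\<in>cls i. \<exists>y\<in>cls j. e = {x, y}} = D i j"
proof (cases "i = j")
  case True
  have "{e \<in> G. \<exists>x\<in>cls i. \<exists>y\<in>cls j. e = {x, y}} = {e \<in> G. e \<subseteq> cls i}"
    using Omega_simple_graph[OF assms(1)] True by (blast elim: simple_graph_on_edgeE)
  then show ?thesis
    using assms True by (simp add: Omega_def)
next
  case False
  then show ?thesis
    using assms by (simp add: Omega_def)
qed

lemma switch_result_in_Omega:
  assumes G: "G \<in> \<Omega>" and L: "legal_switch k cls G u v u' v'"
  shows "switch_result G u v u' v' \<in> \<Omega>"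
proof -
  have sw: "switchable G u v u' v'" and uu': "same_class u u'"
    using L by (simp_all add: legal_switch_iff)
  have sg: "simple_graph_on {1..n} G" and fin: "finite G"
    using Omega_simple_graph[OF G] Omega_finite_graph[OF G] .
  let ?G' = "switch_result G u v u' v'"
  have in_V: "u \<in> {1..n}" "v \<in> {1..n}" "u' \<in> {1..n}" "v' \<in> {1..n}"
    using sw sg by (auto simp: switchable_def dest: simple_graph_on_edgeD)
  have "simple_graph_on {1..n} ?G'"
    using sg sw in_V unfolding simple_graph_on_def switch_result_def switchable_def by auto
  moreover have "degree ?G' x = degree G x" for x
    unfolding degree_def using sw by (intro card_filter_switch_result[OF sw fin]) (auto simp: switchable_def)
  moreover have "card {e \<in> ?G'. \<exists>a\<in>cls i. \<exists>b\<in>cls j. e = {a, b}}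
               = card {e \<in> G. \<exists>a\<in>cls i. \<exists>b\<in>cls j. e = {a, b}}" if "i < k" "j < k" for i j
    using same_class_mem_iff[OF uu'] that
    by (intro card_filter_switch_result[OF sw fin]) (simp add: doubleton_between_iff add.commute)
  moreover have "card {e \<in> ?G'. e \<subseteq> cls i} = card {e \<in> G. e \<subseteq> cls i}" if "i < k" for i
    using same_class_mem_iff[OF uu'] that by (intro card_filter_switch_result[OF sw fin]) auto
  ultimately show ?thesis
    using G unfolding Omega_def by auto
qed

lemma switches_Omega: "(G, H) \<in> switches \<Longrightarrow> G \<in> \<Omega> \<and> H \<in> \<Omega>"
  unfolding switch_rel_def switch_nbrs_def using switch_result_in_Omega by blast

lemma switchesI: "G \<in> \<Omega> \<Longrightarrow> legal_switch k cls G u v u' v' \<Longrightarrow> (G, switch_result G u v u' v') \<in> switches"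
  unfolding switch_rel_def switch_nbrs_def by blast

lemma sym_switches: "sym switches"
proof (rule symI)
  fix G H assume "(G, H) \<in> switches"
  then obtain u v u' v' where G: "G \<in> \<Omega>" and L: "legal_switch k cls G u v u' v'"
    and H: "H = switch_result G u v u' v'"
    unfolding switch_rel_def switch_nbrs_def by blast
  have "legal_switch k cls H u v' u' v" "switch_result H u v' u' v = G"
    using L switch_result_switch_result[of G u v u' v'] by (simp_all add: H legal_switch_iff)
  then show "(H, G) \<in> switches"
    using switchesI[OF switch_result_in_Omega[OF G L]] H by metis
qed

lemma rtrancl_switches_sym: "(G, H) \<in> switches\<^sup>* \<Longrightarrow> (H, G) \<in> switches\<^sup>*"
  using sym_rtrancl[OF sym_switches] by (auto dest: symD)

lemma rtrancl_switches_Omega: "(G, H) \<in> switches\<^sup>* \<Longrightarrow> G \<in> \<Omega> \<Longrightarrow> H \<in> \<Omega>"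
  by (induction rule: rtrancl_induct) (auto dest: switches_Omega)

definition improvable :: "nat set set \<Rightarrow> nat set set \<Rightarrow> bool" where
  "improvable G H \<longleftrightarrow> (\<exists>G' H'. (G, G') \<in> switches\<^sup>* \<and> (H, H') \<in> switches\<^sup>* \<and>
     card (sym_diff G' H') < card (sym_diff G H))"

definition improvable_near :: "nat \<Rightarrow> nat \<Rightarrow> nat set set \<Rightarrow> nat set set \<Rightarrow> bool" where
  "improvable_near p q G H \<longleftrightarrow> (\<exists>G' H'. (G, G') \<in> switches\<^sup>* \<and> (H, H') \<in> switches\<^sup>* \<and>
     card (sym_diff G' H') + 2 \<le> card (sym_diff G H) \<and>
     (\<forall>e. p \<notin> e \<longrightarrow> q \<notin> e \<longrightarrow> (e \<in> G' \<longleftrightarrow> e \<in> G) \<and> (e \<in> H' \<longleftrightarrow> e \<in> H)))"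

definition cherry :: "nat set set \<Rightarrow> nat set set \<Rightarrow> nat \<Rightarrow> nat \<Rightarrow> nat \<Rightarrow> bool" where
  "cherry G H v p q \<longleftrightarrow> same_class p q \<and> {v, p} \<in> G - H \<and> {v, q} \<in> H - G"

lemma improvable_near_sym: "improvable_near p q G H \<Longrightarrow> improvable_near q p H G"
  unfolding improvable_near_def by (metis Un_commute)

lemma cherry_sym: "cherry G H v p q \<Longrightarrow> cherry H G v q p"
  unfolding cherry_def using same_class_sym by blast

text \<open>The switch [pv, qx | px, qv] repairs both edges at v and at least one of the pairs at x.\<close>
lemma improvable_near_by_switch:
  assumes G: "G \<in> \<Omega>" and H: "H \<in> \<Omega>" and ch: "cherry G H v p q"
    and x: "{q, x} \<in> G" "x \<noteq> p" "{p, x} \<notin> G" and H_differs: "\<not> ({q, x} \<in> H \<and> {p, x} \<notin> H)"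
  shows "improvable_near p q G H"
proof -
  have "v \<noteq> p" "v \<noteq> q" "x \<noteq> q" "p \<noteq> q" "x \<noteq> v"
    using ch x simple_graph_on_edgeD[OF Omega_simple_graph[OF G]]
      simple_graph_on_edgeD[OF Omega_simple_graph[OF H]] unfolding cherry_def by (auto simp: insert_commute)
  then have L: "legal_switch k cls G p v q x"
    using ch x unfolding legal_switch_iff switchable_def cherry_def by (auto simp: insert_commute)
  then have sw: "switchable G p v q x"
    by (simp add: legal_switch_iff)
  let ?G' = "switch_result G p v q x"
  let ?S = "sym_diff G H \<inter> switch_pairs p v q x"
  obtain z where z: "z \<in> ?S" "z \<noteq> {p, v}" "z \<noteq> {q, v}"
  proof (cases "{q, x} \<in> H")
    case True
    then have "{p, x} \<in> ?S" using x H_differs by (simp add: switch_pairs_def)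
    then show ?thesis using that \<open>x \<noteq> v\<close> \<open>x \<noteq> q\<close> by (auto simp: doubleton_eq_iff)
  next
    case False
    then have "{q, x} \<in> ?S" using x by (simp add: switch_pairs_def)
    then show ?thesis using that \<open>x \<noteq> v\<close> \<open>x \<noteq> p\<close> by (auto simp: doubleton_eq_iff)
  qed
  have "{{p, v}, {q, v}, z} \<subseteq> ?S"
    using ch z(1) unfolding cherry_def by (auto simp: switch_pairs_def insert_commute)
  moreover have "card {{p, v}, {q, v}, z} = 3"
    using z \<open>p \<noteq> q\<close> by (auto simp: doubleton_eq_iff)
  ultimately have "3 \<le> card ?S"
    by (metis card_mono finite_Int finite_switch_pairs)
  then have "card (sym_diff ?G' H) + 2 \<le> card (sym_diff G H)"
    using card_sym_diff_switch_result[OF sw Omega_finite_graph[OF G] Omega_finite_graph[OF H]] by linarith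
  moreover have "(G, ?G') \<in> switches\<^sup>*"
    using switchesI[OF G L] by simp
  moreover have "e \<in> ?G' \<longleftrightarrow> e \<in> G" if "p \<notin> e" "q \<notin> e" for e
    using mem_switch_result[OF sw, of e] that by (auto simp: switch_pairs_def)
  ultimately show ?thesis
    unfolding improvable_near_def by blast
qed

text \<open>If no single switch at p, q helps, every vertex that distinguishes p from q in one graph
  distinguishes them in the same way in the other graph; the two edges at v then break the balance
  of neighbourhood sizes forced by the degree condition.\<close>
lemma improvable_near_if_cherry:
  assumes G: "G \<in> \<Omega>" and H: "H \<in> \<Omega>" and ch: "cherry G H v p q"
  shows "improvable_near p q G H"
proof (rule ccontr)
  assume no: "\<not> improvable_near p q G H"
  have G_moves: "{q, x} \<in> H \<and> {p, x} \<notin> H" if "{q, x} \<in> G" "x \<noteq> p" "{p, x} \<notin> G" for x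
    using improvable_near_by_switch[OF G H ch that] no by blast
  have H_moves: "{p, y} \<in> G \<and> {q, y} \<notin> G" if "{p, y} \<in> H" "y \<noteq> q" "{q, y} \<notin> H" for y
    using improvable_near_by_switch[OF H G cherry_sym[OF ch] that] no improvable_near_sym by blast
  define GP GQ HP HQ where "GP = neighbours G p - {q}" and "GQ = neighbours G q - {p}"
    and "HP = neighbours H p - {q}" and "HQ = neighbours H q - {p}"
  have sgG: "simple_graph_on {1..n} G" and sgH: "simple_graph_on {1..n} H"
    using Omega_simple_graph G H by blast+
  have fin: "finite GP" "finite GQ" "finite HP" "finite HQ"
    unfolding GP_def GQ_def HP_def HQ_def using G H by (simp_all add: finite_neighbours)
  have "same_class p q"
    using ch by (simp add: cherry_def)
  then have "card GP = card GQ" "card HP = card HQ"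
    unfolding GP_def GQ_def HP_def HQ_def using card_neighbours_Diff_eq G H by blast+
  then have "card (GQ - GP) = card (GP - GQ)" "card (HP - HQ) = card (HQ - HP)"
    using fin card_Diff_commute by metis+
  have v: "v \<in> GP - GQ" "v \<in> HQ - HP" "v \<noteq> p" "v \<noteq> q"
    using ch simple_graph_on_edgeD[OF sgG] simple_graph_on_edgeD[OF sgH]
    unfolding cherry_def GP_def GQ_def HP_def HQ_def neighbours_def by (auto simp: insert_commute)
  have "GQ - GP \<subset> HQ - HP"
  proof -
    have "x \<in> HQ - HP" if "x \<in> GQ - GP" for x
      using that G_moves[of x] simple_graph_on_edgeD[OF sgG, of q x]
      unfolding GP_def GQ_def HP_def HQ_def neighbours_def by auto
    then show ?thesis using v by blast
  qed
  moreover have "HP - HQ \<subset> GP - GQ"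
  proof -
    have "y \<in> GP - GQ" if "y \<in> HP - HQ" for y
      using that H_moves[of y] simple_graph_on_edgeD[OF sgH, of p y]
      unfolding GP_def GQ_def HP_def HQ_def neighbours_def by auto
    then show ?thesis using v by blast
  qed
  ultimately have "card (GQ - GP) < card (HQ - HP)" "card (HP - HQ) < card (GP - GQ)"
    using fin by (simp_all add: psubset_card_mono)
  then show False
    using \<open>card (GQ - GP) = card (GP - GQ)\<close> \<open>card (HP - HQ) = card (HQ - HP)\<close> by linarith
qed

lemma improvable_sym: "improvable G H \<Longrightarrow> improvable H G"
  unfolding improvable_def by (metis Un_commute)

lemma improvable_if_cherry_after:
  assumes "G \<in> \<Omega>" "H \<in> \<Omega>" "(G, G') \<in> switches\<^sup>*" "(H, H') \<in> switches\<^sup>*"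
    and "cherry G' H' v p q" "card (sym_diff G' H') \<le> card (sym_diff G H)"
  shows "improvable G H"
proof -
  have "G' \<in> \<Omega>" "H' \<in> \<Omega>"
    using assms(1-4) rtrancl_switches_Omega by blast+
  then obtain G'' H'' where "(G', G'') \<in> switches\<^sup>*" "(H', H'') \<in> switches\<^sup>*"
      and "card (sym_diff G'' H'') + 2 \<le> card (sym_diff G' H')"
    using improvable_near_if_cherry[OF _ _ assms(5)] unfolding improvable_near_def by blast
  moreover from this(3) have "card (sym_diff G'' H'') < card (sym_diff G H)"
    using assms(6) by linarith
  ultimately show ?thesis
    using assms(3,4) unfolding improvable_def by (blast intro: rtrancl_trans)
qed

text \<open>Two cherries far enough apart can be resolved one after the other, since resolving the first
  leaves the edges of the second untouched; this pays for a detour that increased the distance by 2.\<close>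
lemma improvable_if_two_cherries_after:
  assumes G: "G \<in> \<Omega>" and H: "H \<in> \<Omega>" and GG': "(G, G') \<in> switches\<^sup>*" and HH': "(H, H') \<in> switches\<^sup>*"
    and ch1: "cherry G' H' v p q" and ch2: "cherry G' H' v' p' q'"
    and apart: "p \<notin> {v', p', q'}" "q \<notin> {v', p', q'}"
    and "card (sym_diff G' H') \<le> card (sym_diff G H) + 2"
  shows "improvable G H"
proof -
  have "G' \<in> \<Omega>" "H' \<in> \<Omega>"
    using G H GG' HH' rtrancl_switches_Omega by blast+
  then obtain G'' H'' where G'G'': "(G', G'') \<in> switches\<^sup>*" and H'H'': "(H', H'') \<in> switches\<^sup>*"
      and closer: "card (sym_diff G'' H'') + 2 \<le> card (sym_diff G' H')"
      and keep: "\<And>e. p \<notin> e \<Longrightarrow> q \<notin> e \<Longrightarrow> (e \<in> G'' \<longleftrightarrow> e \<in> G') \<and> (e \<in> H'' \<longleftrightarrow> e \<in> H')"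
    using improvable_near_if_cherry[OF _ _ ch1] unfolding improvable_near_def by blast
  have "cherry G'' H'' v' p' q'"
    using ch2 apart keep[of "{v', p'}"] keep[of "{v', q'}"] unfolding cherry_def by auto
  moreover have "card (sym_diff G'' H'') \<le> card (sym_diff G H)"
    using closer assms(9) by linarith
  ultimately show ?thesis
    using improvable_if_cherry_after[OF G H rtrancl_trans[OF GG' G'G''] rtrancl_trans[OF HH' H'H'']]
    by blast
qed

lemma improvable_if_cherry:
  assumes "G \<in> \<Omega>" "H \<in> \<Omega>" "cherry G H v p q"
  shows "improvable G H"
  using improvable_if_cherry_after[OF assms(1,2) rtrancl_refl rtrancl_refl assms(3)] by simp

lemma exists_edge_between_same_classes:
  assumes G: "G \<in> \<Omega>" and H: "H \<in> \<Omega>" and ab: "{a, b} \<in> G - H"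
  shows "\<exists>a' b'. {a', b'} \<in> H - G \<and> same_class a a' \<and> same_class b b'"
proof (rule ccontr)
  assume none: "\<not> ?thesis"
  have "a \<in> {1..n}" "b \<in> {1..n}"
    using ab simple_graph_on_edgeD[OF Omega_simple_graph[OF G]] by blast+
  then obtain i j where ij: "i < k" "j < k" "a \<in> cls i" "b \<in> cls j"
    using class_exists by blast
  let ?between = "\<lambda>E. {e \<in> E. \<exists>x\<in>cls i. \<exists>y\<in>cls j. e = {x, y}}"
  have "?between H \<subseteq> ?between G"
    using none ij unfolding same_class_def by (auto simp: insert_commute)
  moreover have "card (?between H) = card (?between G)"
    using card_edges_between G H ij by simp
  ultimately have "?between H = ?between G"
    using Omega_finite_graph[OF G] by (intro card_subset_eq) auto
  then show False
    using ab ij by blast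
qed

lemma exists_private_neighbour:
  assumes G: "G \<in> \<Omega>" and "same_class x y"
    and z: "z \<in> neighbours G x" "z \<notin> neighbours G y" "z \<noteq> y"
  shows "\<exists>w. w \<in> neighbours G y \<and> w \<notin> neighbours G x \<and> w \<noteq> x"
proof (rule ccontr)
  assume "\<not> ?thesis"
  moreover have "y \<notin> neighbours G y"
    using simple_graph_on_edgeD[OF Omega_simple_graph[OF G], of y y] by (auto simp: neighbours_def)
  ultimately have "neighbours G y - {x} \<subseteq> neighbours G x - {y}"
    by auto
  then have "neighbours G y - {x} = neighbours G x - {y}"
    using card_neighbours_Diff_eq[OF assms(1,2)] finite_neighbours[OF G]
    by (intro card_subset_eq) auto
  then show False
    using z by auto
qed

text \<open>Switching ab and a'w to aw and a'b, for a neighbour w of a' that is not a neighbour of a,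
  makes a'b an edge only in G, giving the cherry a'b, a'b'. The switch costs at most 2, and if it
  costs exactly 2 then aw, a'w form a second cherry.\<close>
lemma improvable_if_crossing_pair_in_neither:
  assumes G: "G \<in> \<Omega>" and H: "H \<in> \<Omega>" and ab: "{a, b} \<in> G - H" and ab': "{a', b'} \<in> H - G"
    and aa': "same_class a a'" and bb': "same_class b b'" and distinct: "distinct [a, b, a', b']"
    and a'b: "{a', b} \<notin> G" "{a', b} \<notin> H"
  shows "improvable G H"
proof -
  obtain w where w: "{a', w} \<in> G" "{a, w} \<notin> G" "w \<noteq> a"
    using exists_private_neighbour[OF G aa', of b] ab a'b distinct by (auto simp: neighbours_def)
  have "w \<noteq> a'" "w \<noteq> b" "w \<noteq> b'"
    using w a'b ab' simple_graph_on_edgeD[OF Omega_simple_graph[OF G]] by auto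
  then have L: "legal_switch k cls G a b a' w"
    using ab a'b w aa' distinct by (auto simp: legal_switch_iff switchable_def)
  then have sw: "switchable G a b a' w"
    by (simp add: legal_switch_iff)
  let ?G' = "switch_result G a b a' w"
  let ?S = "sym_diff G H \<inter> switch_pairs a b a' w"
  have GG': "(G, ?G') \<in> switches\<^sup>*"
    using switchesI[OF G L] by simp
  have G': "{a', b} \<in> ?G'" "{a', b'} \<notin> ?G'" "{a, w} \<in> ?G'" "{a', w} \<notin> ?G'"
    using mem_switch_result[OF sw] a'b ab' w distinct \<open>w \<noteq> b'\<close>
    by (auto simp: switch_pairs_def doubleton_eq_iff)
  have count: "card (sym_diff ?G' H) + 2 * card ?S = card (sym_diff G H) + 4"
    using card_sym_diff_switch_result[OF sw] G H by (simp add: Omega_finite_graph)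
  have first: "cherry ?G' H a' b b'"
    using G' a'b ab' bb' by (simp add: cherry_def)
  have "{a, b} \<in> ?S"
    using ab by (simp add: switch_pairs_def)
  show ?thesis
  proof (cases "{a', w} \<in> H \<and> {a, w} \<notin> H")
    case True
    then have "cherry ?G' H w a a'"
      using G' aa' by (simp add: cherry_def insert_commute)
    moreover have "1 \<le> card ?S"
      using \<open>{a, b} \<in> ?S\<close> by (auto simp: Suc_le_eq card_gt_0_iff)
    ultimately show ?thesis
      using improvable_if_two_cherries_after[OF G H GG' rtrancl_refl first] count distinct
        \<open>w \<noteq> b\<close> \<open>w \<noteq> b'\<close> by auto
  next
    case False
    have "{a, w} \<in> ?S \<or> {a', w} \<in> ?S"
      using False w by (auto simp: switch_pairs_def)
    moreover have "{a, w} \<noteq> {a, b}" "{a', w} \<noteq> {a, b}"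
      using \<open>w \<noteq> b\<close> distinct by (auto simp: doubleton_eq_iff)
    ultimately obtain z where "z \<in> ?S" "z \<noteq> {a, b}"
      by blast
    then have "card {{a, b}, z} \<le> card ?S"
      using \<open>{a, b} \<in> ?S\<close> by (intro card_mono) auto
    then show ?thesis
      using improvable_if_cherry_after[OF G H GG' rtrancl_refl first] count \<open>z \<noteq> {a, b}\<close> by simp
  qed
qed

text \<open>The same argument with the roles of the two graphs exchanged: the switch is made in H.\<close>
lemma improvable_if_crossing_pair_in_both:
  assumes G: "G \<in> \<Omega>" and H: "H \<in> \<Omega>" and ab: "{a, b} \<in> G - H" and ab': "{a', b'} \<in> H - G"
    and aa': "same_class a a'" and bb': "same_class b b'" and distinct: "distinct [a, b, a', b']"
    and a'b: "{a', b} \<in> G" "{a', b} \<in> H"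
  shows "improvable G H"
proof -
  obtain w where w: "{a, w} \<in> H" "{a', w} \<notin> H" "w \<noteq> a'"
    using exists_private_neighbour[OF H same_class_sym[OF aa'], of b] ab a'b distinct
    by (auto simp: neighbours_def insert_commute)
  have "w \<noteq> a" "w \<noteq> b" "w \<noteq> b'"
    using w ab ab' simple_graph_on_edgeD[OF Omega_simple_graph[OF H]] by auto
  then have L: "legal_switch k cls H a' b a w"
    using ab a'b w aa' distinct by (auto simp: legal_switch_iff switchable_def same_class_sym)
  then have sw: "switchable H a' b a w"
    by (simp add: legal_switch_iff)
  let ?H' = "switch_result H a' b a w"
  let ?S = "sym_diff H G \<inter> switch_pairs a' b a w"
  have HH': "(H, ?H') \<in> switches\<^sup>*"
    using switchesI[OF H L] by simp
  have H': "{a', b} \<notin> ?H'" "{a', b'} \<in> ?H'" "{a, w} \<notin> ?H'" "{a', w} \<in> ?H'"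
    using mem_switch_result[OF sw] a'b ab' w distinct \<open>w \<noteq> b'\<close>
    by (auto simp: switch_pairs_def doubleton_eq_iff)
  have "card (sym_diff ?H' G) + 2 * card ?S = card (sym_diff H G) + 4"
    using card_sym_diff_switch_result[OF sw] G H by (simp add: Omega_finite_graph)
  then have count: "card (sym_diff G ?H') + 2 * card ?S = card (sym_diff G H) + 4"
    by (simp add: Un_commute)
  have first: "cherry G ?H' a' b b'"
    using H' a'b ab' bb' by (simp add: cherry_def)
  have "{a, b} \<in> ?S"
    using ab by (simp add: switch_pairs_def)
  show ?thesis
  proof (cases "{a, w} \<in> G \<and> {a', w} \<notin> G")
    case True
    then have "cherry G ?H' w a a'"
      using H' aa' by (simp add: cherry_def insert_commute)
    moreover have "1 \<le> card ?S"
      using \<open>{a, b} \<in> ?S\<close> by (auto simp: Suc_le_eq card_gt_0_iff)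
    ultimately show ?thesis
      using improvable_if_two_cherries_after[OF G H rtrancl_refl HH' first] count distinct
        \<open>w \<noteq> b\<close> \<open>w \<noteq> b'\<close> by auto
  next
    case False
    have "{a, w} \<in> ?S \<or> {a', w} \<in> ?S"
      using False w by (auto simp: switch_pairs_def)
    moreover have "{a, w} \<noteq> {a, b}" "{a', w} \<noteq> {a, b}"
      using \<open>w \<noteq> b\<close> distinct by (auto simp: doubleton_eq_iff)
    ultimately obtain z where "z \<in> ?S" "z \<noteq> {a, b}"
      by blast
    then have "card {{a, b}, z} \<le> card ?S"
      using \<open>{a, b} \<in> ?S\<close> by (intro card_mono) auto
    then show ?thesis
      using improvable_if_cherry_after[OF G H rtrancl_refl HH' first] count \<open>z \<noteq> {a, b}\<close> by simp
  qed
qed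

lemma improvable_if_edge_differs:
  assumes G: "G \<in> \<Omega>" and H: "H \<in> \<Omega>" and ab: "{a, b} \<in> G - H"
  shows "improvable G H"
proof -
  obtain a' b' where ab': "{a', b'} \<in> H - G" and aa': "same_class a a'" and bb': "same_class b b'"
    using exists_edge_between_same_classes[OF G H ab] by blast
  have "a \<noteq> b" "a' \<noteq> b'"
    using ab ab' simple_graph_on_edgeD Omega_simple_graph G H by blast+
  show ?thesis
  proof (cases "distinct [a, b, a', b'] \<and> {a', b} \<notin> sym_diff G H")
    case True
    then consider "{a', b} \<notin> G \<and> {a', b} \<notin> H" | "{a', b} \<in> G \<and> {a', b} \<in> H"
      by blast
    then show ?thesis
      using improvable_if_crossing_pair_in_neither[OF G H ab ab' aa' bb']
        improvable_if_crossing_pair_in_both[OF G H ab ab' aa' bb'] True by cases blast+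
  next
    case False
    have ab'_class: "same_class a b'" if "a' = b"
      using that aa' bb' same_class_trans by blast
    have ba'_class: "same_class b a'" if "b' = a"
      using that aa' bb' same_class_trans by blast
    from False consider "a' = a" | "b' = b" | "b' = a" | "a' = b" | "{a', b} \<in> G - H" | "{a', b} \<in> H - G"
      using \<open>a \<noteq> b\<close> \<open>a' \<noteq> b'\<close> by auto
    then obtain v p q where "cherry G H v p q"
    proof cases
      case 1
      then show ?thesis using that[of a b b'] ab ab' bb' by (simp add: cherry_def)
    next
      case 2
      then show ?thesis using that[of b a a'] ab ab' aa' by (simp add: cherry_def insert_commute)
    next
      case 3
      then show ?thesis using that[of a b a'] ab ab' ba'_class by (simp add: cherry_def insert_commute)
    next
      case 4
      then show ?thesis using that[of b a b'] ab ab' ab'_class by (simp add: cherry_def insert_commute)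
    next
      case 5
      then show ?thesis using that[of a' b b'] ab' bb' by (simp add: cherry_def)
    next
      case 6
      then show ?thesis using that[of b a a'] ab aa' by (simp add: cherry_def insert_commute)
    qed
    then show ?thesis
      using improvable_if_cherry[OF G H] by blast
  qed
qed

lemma switches_connected:
  assumes "G \<in> \<Omega>" "H \<in> \<Omega>"
  shows "(G, H) \<in> switches\<^sup>*"
  using assms
proof (induction "card (sym_diff G H)" arbitrary: G H rule: less_induct)
  case less
  show ?case
  proof (cases "G = H")
    case False
    then obtain e where "e \<in> sym_diff G H"
      by blast
    then have "improvable G H"
    proof
      assume "e \<in> G - H"
      then obtain a b where "e = {a, b}"
        using less.prems(1) by (auto elim: simple_graph_on_edgeE[OF Omega_simple_graph])
      then show ?thesis
        using improvable_if_edge_differs less.prems \<open>e \<in> G - H\<close> by blast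
    next
      assume "e \<in> H - G"
      then obtain a b where "e = {a, b}"
        using less.prems(2) by (auto elim: simple_graph_on_edgeE[OF Omega_simple_graph])
      then show ?thesis
        using improvable_if_edge_differs less.prems \<open>e \<in> H - G\<close> improvable_sym by blast
    qed
    then obtain G' H' where GG': "(G, G') \<in> switches\<^sup>*" and HH': "(H, H') \<in> switches\<^sup>*"
      and "card (sym_diff G' H') < card (sym_diff G H)"
      unfolding improvable_def by blast
    moreover have "G' \<in> \<Omega>" "H' \<in> \<Omega>"
      using GG' HH' less.prems rtrancl_switches_Omega by blast+
    ultimately have "(G', H') \<in> switches\<^sup>*"
      using less.hyps by blast
    then show ?thesis
      using GG' rtrancl_switches_sym[OF HH'] by (blast intro: rtrancl_trans)
  qed simp
qed

lemma switch_nbrs_subset_Omega: "G \<in> \<Omega> \<Longrightarrow> switch_nbrs k cls G \<subseteq> \<Omega>"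
  unfolding switch_nbrs_def using switch_result_in_Omega by blast

lemma finite_switch_nbrs: "G \<in> \<Omega> \<Longrightarrow> finite (switch_nbrs k cls G)"
  using switch_nbrs_subset_Omega finite_Omega finite_subset by blast

lemma self_notin_switch_nbrs: "G \<notin> switch_nbrs k cls G"
  unfolding switch_nbrs_def legal_switch_def switch_result_def by auto

lemma trans_prob_self_ge_half:
  assumes G: "G \<in> \<Omega>"
  shows "1 / 2 \<le> trans_prob n k cls d D G G"
proof -
  let ?N = "switch_nbrs k cls G"
  let ?l = "real (num_switches k cls G)"
  define move where "move H = (if H \<noteq> G \<and> H \<in> ?N
      then 1 / 2 * (1 / ?l) * (?l / (?l + real (num_switches k cls H))) else 0)" for H
  have "move H \<le> (if H \<in> ?N then 1 / (2 * ?l) else 0)" for H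
  proof -
    have "?l / (?l + real (num_switches k cls H)) \<le> 1"
      by (cases "?l + real (num_switches k cls H) = 0") (simp_all add: divide_le_eq_1)
    then have "1 / 2 * (1 / ?l) * (?l / (?l + real (num_switches k cls H))) \<le> 1 / 2 * (1 / ?l)"
      by (intro mult_left_le) auto
    then show ?thesis
      unfolding move_def by auto
  qed
  then have "(\<Sum>H\<in>\<Omega> - {G}. move H) \<le> (\<Sum>H\<in>\<Omega> - {G}. if H \<in> ?N then 1 / (2 * ?l) else 0)"
    by (intro sum_mono)
  also have "\<dots> = (\<Sum>H\<in>(\<Omega> - {G}) \<inter> ?N. 1 / (2 * ?l))"
    by (rule sum.inter_restrict[symmetric]) (simp add: finite_Omega)
  also have "\<dots> = (\<Sum>H\<in>?N. 1 / (2 * ?l))"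
    using switch_nbrs_subset_Omega[OF G] self_notin_switch_nbrs by (subst Int_absorb1) auto
  also have "\<dots> \<le> 1 / 2"
    by (simp add: num_switches_def)
  finally show ?thesis
    unfolding trans_prob_def move_def Let_def by simp
qed

lemma trans_prob_nonneg:
  assumes "G \<in> \<Omega>"
  shows "0 \<le> trans_prob n k cls d D G G'"
proof (cases "G' = G")
  case True
  then show ?thesis
    using trans_prob_self_ge_half[OF assms] by simp
qed (simp add: trans_prob_def)

lemma trans_prob_pos:
  assumes G: "G \<in> \<Omega>" and G': "G' \<in> switch_nbrs k cls G"
  shows "0 < trans_prob n k cls d D G G'"
proof -
  have "0 < num_switches k cls G"
    unfolding num_switches_def using finite_switch_nbrs[OF G] G' by (auto simp: card_gt_0_iff)
  moreover have "G' \<noteq> G"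
    using G' self_notin_switch_nbrs by blast
  ultimately show ?thesis
    unfolding trans_prob_def Let_def using G' by (simp add: add_pos_nonneg)
qed

lemma trans_prob_n_nonneg: "0 \<le> trans_prob_n n k cls d D t G G'"
  by (induction t arbitrary: G') (auto intro!: sum_nonneg mult_nonneg_nonneg trans_prob_nonneg)

lemma trans_prob_n_pos_if_reachable:
  assumes "(G, G') \<in> switches\<^sup>*"
  shows "\<exists>t. 0 < trans_prob_n n k cls d D t G G'"
  using assms
proof (induction rule: rtrancl_induct)
  case base
  show ?case
    by (rule exI[of _ 0]) simp
next
  case (step H H')
  then obtain t where t: "0 < trans_prob_n n k cls d D t G H"
    by blast
  have H: "H \<in> \<Omega>" and H': "H' \<in> switch_nbrs k cls H"
    using step(2) unfolding switch_rel_def by auto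
  have "0 < trans_prob_n n k cls d D t G H * trans_prob n k cls d D H H'"
    using t trans_prob_pos[OF H H'] by simp
  also have "\<dots> \<le> trans_prob_n n k cls d D (Suc t) G H'"
    using H finite_Omega
    by (auto intro!: member_le_sum mult_nonneg_nonneg trans_prob_n_nonneg trans_prob_nonneg)
  finally show ?case
    by blast
qed

end

theorem lemma4:
  fixes n k :: nat and cls :: "nat \<Rightarrow> nat set" and d :: "nat \<Rightarrow> nat" and D :: "nat \<Rightarrow> nat \<Rightarrow> nat"
  assumes "is_partition n k cls"
  shows "irreducible_chain n k cls d D \<and>
         (\<forall>G0\<in>Omega n k cls d D. \<forall>G1\<in>Omega n k cls d D. (G0, G1) \<in> (switch_rel n k cls d D)\<^sup>*)"
proof -
  interpret switch_space n k cls d D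
    using assms by unfold_locales
  show ?thesis
    unfolding irreducible_chain_def using switches_connected trans_prob_n_pos_if_reachable by blast
qed

end
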